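(* Let $t<u$ be $b$-imal numbers in $[0,1]$ and let $l'\ge0$ be such that $b^{l'}t$ and $b^{l'}u$ are integers. Then for every $k\ge l'$, $\mu_k([t,u))=b(u-t)$. Moreover, for every interval $I\subset[0,1)$, $\lim_{k\to\infty}\mu_k(I)=b\,|I|$, where $|I|=\sup I-\inf I$.
   Context: Fix $b\ge2$ and $d\in\{0,\dots,b-1\}$. A $b$-imal number is an element of $\bigcup_{l\ge0}b^{-l}\mathbb Z$. A string is a finite sequence $X=(d_l,\dots,d_1)$ of digits in $\{0,\dots,b-1\}$ (leading zeros allowed), of length $|X|=l\ge0$; its value is $n(X)=\sum_{i=1}^{l}d_ib^{i-1}$ ($0$ for the empty string). For $k\ge0$, $\mu_k=\sum_{X}b^{-|X|}\delta_{n(X)/b^{|X|}}$, the sum over all strings $X$ containing $d$ exactly $k$ times (masses at the same point add); it is a measure on $[0,1)$ of total mass $b$. *)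

theory Defs
  imports "HOL-Analysis.Analysis"
begin

text \<open>A string of base-b digits, most significant digit first: X = (d_l,...,d_1).\<close>
definition is_string :: "nat \<Rightarrow> nat list \<Rightarrow> bool" where
  "is_string b X \<longleftrightarrow> set X \<subseteq> {0..<b}"

text \<open>n(X) = sum_{i=1}^{l} d_i b^(i-1); the list element at position j is d_(l-j).\<close>
definition str_val :: "nat \<Rightarrow> nat list \<Rightarrow> nat" where
  "str_val b X = (\<Sum>j<length X. X ! j * b ^ (length X - 1 - j))"

definition mu :: "nat \<Rightarrow> nat \<Rightarrow> nat \<Rightarrow> real set \<Rightarrow> ennreal" where
  "mu b d k A = infsum (\<lambda>X. ennreal (1 / real b ^ length X))
      {X. is_string b X \<and> count_list X d = k \<and> real (str_val b X) / real b ^ length X \<in> A}"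

definition bimal :: "nat \<Rightarrow> real \<Rightarrow> bool" where
  "bimal b x \<longleftrightarrow> (\<exists>l::nat. real b ^ l * x \<in> \<int>)"

end

theory Submission
  imports Defs
begin

text \<open>A string X with exactly k digits d, where k \<ge> l, splits as X = J @ Y with |J| = l: its
  point n(X)/b^|X| lies in [a/b^l, c/b^l) iff a \<le> n(J) < c, while Y ranges over all strings with
  the remaining number of digits d. For every m the strings with exactly m digits d have total
  weight b: for m = 0 this is the geometric series of ((b-1)/b)^n, and a string with m + 1 of them
  factors uniquely as A @ d # B with A free of d, which costs one factor 1/b. Hence the mass of
  [a/b^l, c/b^l) is (c - a) b^-l b. A general interval is squeezed between two intervals of the grid
  b^-k \<int> whose lengths differ from its own by at most 2 b^-k.\<close>

lemma str_val_Nil [simp]: "str_val b [] = 0"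
  by (simp add: str_val_def)

lemma str_val_Cons [simp]: "str_val b (x # X) = x * b ^ length X + str_val b X"
proof -
  have "str_val b (x # X) = (\<Sum>j<Suc (length X). (x # X) ! j * b ^ (length X - j))"
    by (simp add: str_val_def)
  also have "\<dots> = x * b ^ length X + (\<Sum>j<length X. (x # X) ! Suc j * b ^ (length X - Suc j))"
    by (subst sum.lessThan_Suc_shift) simp
  also have "\<dots> = x * b ^ length X + str_val b X"
    by (simp add: str_val_def)
  finally show ?thesis .
qed

lemma str_val_append: "str_val b (X @ Y) = str_val b X * b ^ length Y + str_val b Y"
  by (induction X) (auto simp: algebra_simps power_add)

lemma is_string_Nil [simp]: "is_string b []"
  by (simp add: is_string_def)

lemma is_string_Cons [simp]: "is_string b (x # X) \<longleftrightarrow> x < b \<and> is_string b X"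
  by (auto simp: is_string_def)

lemma is_string_append [simp]: "is_string b (X @ Y) \<longleftrightarrow> is_string b X \<and> is_string b Y"
  by (auto simp: is_string_def)

lemma str_val_less: "is_string b X \<Longrightarrow> str_val b X < b ^ length X"
proof (induction X)
  case Nil
  then show ?case by simp
next
  case (Cons x X)
  then have "x \<le> b - 1" "str_val b X < b ^ length X" by auto
  then have "x * b ^ length X + str_val b X < (b - 1) * b ^ length X + b ^ length X"
    by (meson add_le_less_mono mult_le_mono1)
  also have "\<dots> = b ^ Suc (length X)" using Cons by (cases b) auto
  finally show ?case by simp
qed

lemma str_val_inj:
  assumes "is_string b X" "is_string b Y" "length X = length Y" "str_val b X = str_val b Y"
  shows "X = Y"
  using assms
proof (induction X arbitrary: Y)
  case Nil
  then show ?case by simp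
next
  case (Cons x X)
  from Cons.prems(3) obtain y Y' where Y: "Y = y # Y'" and len: "length Y' = length X"
    by (cases Y) auto
  let ?B = "b ^ length X"
  have less: "str_val b X < ?B" "str_val b Y' < ?B"
    using Cons.prems(1,2) Y len str_val_less[of b X] str_val_less[of b Y'] by auto
  have val: "x * ?B + str_val b X = y * ?B + str_val b Y'"
    using Cons.prems(4) Y len by simp
  have "?B > 0"
    using less(1) by linarith
  then have "(x * ?B + str_val b X) div ?B = x" "(y * ?B + str_val b Y') div ?B = y"
    using less by simp_all
  then have "x = y"
    using val by simp
  with val have "str_val b X = str_val b Y'" by simp
  then have "X = Y'"
    using Cons.prems(1,2) Cons.IH[of Y'] Y len by simp
  then show ?case
    using Y \<open>x = y\<close> by simp
qed

lemma finite_strings_length: "finite {X. is_string b X \<and> length X = n}"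
  using finite_lists_length_eq[of "{0..<b}" n] by (simp add: is_string_def)

lemma card_strings_length: "card {X. is_string b X \<and> length X = n} = b ^ n"
  using card_lists_length_eq[of "{0..<b}" n] by (simp add: is_string_def)

lemma str_val_image_strings_length:
  "str_val b ` {X. is_string b X \<and> length X = n} = {0..<b ^ n}"
proof (rule card_subset_eq)
  show "str_val b ` {X. is_string b X \<and> length X = n} \<subseteq> {0..<b ^ n}"
    using str_val_less by fastforce
  have "inj_on (str_val b) {X. is_string b X \<and> length X = n}"
    by (auto intro!: inj_onI str_val_inj)
  then show "card (str_val b ` {X. is_string b X \<and> length X = n}) = card {0..<b ^ n}"
    by (simp add: card_image card_strings_length)
qed simp

lemma card_strings_value_between:
  assumes "0 \<le> a" "c \<le> int (b ^ l)"
  shows "card {J. is_string b J \<and> length J = l \<and> a \<le> int (str_val b J) \<and> int (str_val b J) < c}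
    = nat c - nat a" (is "card ?G = _")
proof -
  have "inj_on (str_val b) ?G"
    by (auto intro!: inj_onI str_val_inj)
  moreover have "str_val b ` ?G = {nat a..<nat c}"
  proof -
    have interval: "{n \<in> {0..<m}. a \<le> int n \<and> int n < c} = {nat a..<nat c}" if "c \<le> int m" for m
      using that assms(1) by auto
    have "str_val b ` ?G = {n \<in> str_val b ` {J. is_string b J \<and> length J = l}. a \<le> int n \<and> int n < c}"
      by auto
    also have "\<dots> = {n \<in> {0..<b ^ l}. a \<le> int n \<and> int n < c}"
      by (simp only: str_val_image_strings_length)
    also have "\<dots> = {nat a..<nat c}"
      using interval[OF assms(2)] .
    finally show ?thesis .
  qed
  ultimately show ?thesis
    using card_image[of "str_val b" ?G] by simp
qed

lemma has_sum_Sigma_nonneg: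
  fixes f :: "'a \<times> 'b \<Rightarrow> real"
  assumes "\<And>x. x \<in> A \<Longrightarrow> ((\<lambda>y. f (x, y)) has_sum g x) (B x)"
    and "(g has_sum s) A"
    and "\<And>x y. x \<in> A \<Longrightarrow> y \<in> B x \<Longrightarrow> 0 \<le> f (x, y)"
  shows "(f has_sum s) (Sigma A B)"
proof (rule has_sum_SigmaI[OF assms(1,2)])
  show "f summable_on Sigma A B"
    using assms by (intro summable_on_SigmaI[where g = g] has_sum_imp_summable[OF assms(2)]) auto
qed

lemma has_sum_ennreal:
  assumes "\<And>x. x \<in> A \<Longrightarrow> 0 \<le> f x" "(f has_sum s) A"
  shows "((\<lambda>x. ennreal (f x)) has_sum ennreal s) A"
proof -
  have "((\<lambda>F. ennreal (sum f F)) \<longlongrightarrow> ennreal s) (finite_subsets_at_top A)"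
    using assms by (intro tendsto_ennrealI) (auto simp: has_sum_def)
  moreover have "\<forall>\<^sub>F F in finite_subsets_at_top A. ennreal (sum f F) = (\<Sum>x\<in>F. ennreal (f x))"
    using assms(1) by (intro eventually_finite_subsets_at_top_weakI) (auto simp: subset_iff)
  ultimately show ?thesis
    unfolding has_sum_def using Lim_transform_eventually by fastforce
qed

definition str_weight :: "nat \<Rightarrow> nat list \<Rightarrow> real" where
  "str_weight b X = 1 / real b ^ length X"

definition str_point :: "nat \<Rightarrow> nat list \<Rightarrow> real" where
  "str_point b X = real (str_val b X) / real b ^ length X"

definition strings_count :: "nat \<Rightarrow> nat \<Rightarrow> nat \<Rightarrow> nat list set" where
  "strings_count b d m = {X. is_string b X \<and> count_list X d = m}"

lemma mu_eq_infsum_str_weight: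
  "mu b d k A = infsum (\<lambda>X. ennreal (str_weight b X)) {X \<in> strings_count b d k. str_point b X \<in> A}"
  by (simp add: mu_def str_weight_def str_point_def strings_count_def)

lemma str_weight_append: "str_weight b (X @ Y) = str_weight b X * str_weight b Y"
  by (simp add: str_weight_def power_add)

lemma str_weight_nonneg: "0 \<le> str_weight b X"
  by (simp add: str_weight_def)

lemma has_sum_str_weight_no_digit:
  assumes "b \<ge> 2" "d < b"
  shows "(str_weight b has_sum real b) (strings_count b d 0)"
proof -
  define D where "D = {0..<b} - {d}"
  define L where "L n = {X. set X \<subseteq> D \<and> length X = n}" for n
  have "finite D" "card D = b - 1"
    using assms by (simp_all add: D_def)
  have by_length: "strings_count b d 0 = snd ` (SIGMA n:UNIV. L n)"
    by (auto simp: strings_count_def L_def D_def is_string_def count_list_0_iff image_iff)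
  have "inj_on snd (SIGMA n:UNIV. L n)"
    by (auto simp: inj_on_def L_def)
  have level: "((\<lambda>X. (str_weight b \<circ> snd) (n, X)) has_sum ((real b - 1) / real b) ^ n) (L n)" for n
  proof -
    have fin: "finite (L n)" and card: "card (L n) = (b - 1) ^ n"
      using finite_lists_length_eq[OF \<open>finite D\<close>, of n] card_lists_length_eq[OF \<open>finite D\<close>, of n]
        \<open>card D = b - 1\<close> by (simp_all add: L_def)
    have "sum (str_weight b) (L n) = ((real b - 1) / real b) ^ n"
      using card assms by (simp add: str_weight_def L_def power_divide of_nat_diff)
    then show ?thesis
      using has_sum_finite[OF fin, of "str_weight b"] by simp
  qed
  have "((\<lambda>n. ((real b - 1) / real b) ^ n) has_sum 1 / (1 - (real b - 1) / real b)) UNIV"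
    using assms by (intro sums_nonneg_imp_has_sum geometric_sums) auto
  moreover have "1 / (1 - (real b - 1) / real b) = real b"
    using assms by (simp add: field_simps)
  ultimately have geometric: "((\<lambda>n. ((real b - 1) / real b) ^ n) has_sum real b) UNIV"
    by simp
  have "((str_weight b \<circ> snd) has_sum real b) (SIGMA n:UNIV. L n)"
    by (rule has_sum_Sigma_nonneg[OF level geometric]) (simp add: str_weight_nonneg)
  then show ?thesis
    unfolding by_length by (simp add: has_sum_reindex[OF \<open>inj_on snd _\<close>])
qed

lemma strings_count_Suc:
  assumes "d < b"
  shows "strings_count b d (Suc m) = (\<lambda>(A, B). A @ d # B) ` (strings_count b d 0 \<times> strings_count b d m)"
proof
  show "strings_count b d (Suc m) \<subseteq> (\<lambda>(A, B). A @ d # B) ` (strings_count b d 0 \<times> strings_count b d m)"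
  proof
    fix X assume X: "X \<in> strings_count b d (Suc m)"
    then have "count_list X d \<noteq> 0" by (simp add: strings_count_def)
    then have "d \<in> set X" by (simp add: count_list_0_iff)
    then obtain A B where "X = A @ d # B" "d \<notin> set A"
      using split_list_first by metis
    with X assms show "X \<in> (\<lambda>(A, B). A @ d # B) ` (strings_count b d 0 \<times> strings_count b d m)"
      by (auto simp: strings_count_def count_list_0_iff image_iff)
  qed
qed (use assms in \<open>auto simp: strings_count_def count_list_0_iff\<close>)

lemma inj_on_insert_first_digit:
  "inj_on (\<lambda>(A, B). A @ d # B) (strings_count b d 0 \<times> strings_count b d m)"
proof (rule inj_onI, clarify)
  fix A B A' B'
  assume "A \<in> strings_count b d 0" "A' \<in> strings_count b d 0" and eq: "A @ d # B = A' @ d # B'"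
  then have "d \<notin> set A" "d \<notin> set A'"
    by (auto simp: strings_count_def count_list_0_iff)
  moreover have "takeWhile (\<lambda>x. x \<noteq> d) (C @ d # D) = C" if "d \<notin> set C" for C D
    using that by (induction C) auto
  ultimately have "A = A'"
    using eq by metis
  then show "A = A' \<and> B = B'" using eq by simp
qed

lemma has_sum_str_weight_strings_count:
  assumes "b \<ge> 2" "d < b"
  shows "(str_weight b has_sum real b) (strings_count b d m)"
proof (induction m)
  case 0
  show ?case using has_sum_str_weight_no_digit[OF assms] .
next
  case (Suc m)
  let ?ins = "\<lambda>(A, B). A @ d # B"
  have weight: "str_weight b (A @ d # B) = (1 / real b * str_weight b A) * str_weight b B" for A B
    using str_weight_append[of b A "[d] @ B"] str_weight_append[of b "[d]" B]
    by (simp add: str_weight_def mult_ac)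
  have "((\<lambda>B. (str_weight b \<circ> ?ins) (A, B)) has_sum (1 / real b * str_weight b A) * real b)
      (strings_count b d m)" for A
    unfolding comp_def case_prod_conv weight by (rule has_sum_cmult_right[OF Suc])
  moreover have "((\<lambda>A. (1 / real b * str_weight b A) * real b) has_sum real b) (strings_count b d 0)"
    using has_sum_str_weight_no_digit[OF assms] assms by simp
  ultimately have "((str_weight b \<circ> ?ins) has_sum real b) (strings_count b d 0 \<times> strings_count b d m)"
    by (rule has_sum_Sigma_nonneg) (simp add: str_weight_nonneg)
  then show ?case
    unfolding strings_count_Suc[OF assms(2)] by (simp add: has_sum_reindex[OF inj_on_insert_first_digit])
qed

lemma strings_count_prefix_decomp:
  assumes "l \<le> k"
  shows "{X \<in> strings_count b d k. P (take l X)} = (\<lambda>(J, Y). J @ Y) `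
    (SIGMA J:{J. is_string b J \<and> length J = l \<and> P J}. strings_count b d (k - count_list J d))"
proof
  show "{X \<in> strings_count b d k. P (take l X)} \<subseteq> (\<lambda>(J, Y). J @ Y) `
    (SIGMA J:{J. is_string b J \<and> length J = l \<and> P J}. strings_count b d (k - count_list J d))"
  proof clarify
    fix X assume X: "X \<in> strings_count b d k" "P (take l X)"
    then have "l \<le> length X"
      using assms count_le_length[of X d] by (simp add: strings_count_def)
    moreover have "count_list X d = count_list (take l X) d + count_list (drop l X) d"
      by (metis append_take_drop_id count_list_append)
    moreover have "is_string b (take l X)" "is_string b (drop l X)"
      using X(1) by (metis append_take_drop_id is_string_append mem_Collect_eq strings_count_def)+
    ultimately show "X \<in> (\<lambda>(J, Y). J @ Y) `
      (SIGMA J:{J. is_string b J \<and> length J = l \<and> P J}. strings_count b d (k - count_list J d))"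
      using X by (intro image_eqI[where x="(take l X, drop l X)"]) (auto simp: strings_count_def)
  qed
next
  show "(\<lambda>(J, Y). J @ Y) ` (SIGMA J:{J. is_string b J \<and> length J = l \<and> P J}.
      strings_count b d (k - count_list J d)) \<subseteq> {X \<in> strings_count b d k. P (take l X)}"
  proof
    fix X assume "X \<in> (\<lambda>(J, Y). J @ Y) ` (SIGMA J:{J. is_string b J \<and> length J = l \<and> P J}.
      strings_count b d (k - count_list J d))"
    then obtain J Y where X: "X = J @ Y" and J: "is_string b J" "length J = l" "P J"
      and Y: "Y \<in> strings_count b d (k - count_list J d)"
      by auto
    have "count_list J d \<le> k"
      using J(2) assms count_le_length[of J d] by simp
    then show "X \<in> {X \<in> strings_count b d k. P (take l X)}"
      using X J Y by (simp add: strings_count_def)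
  qed
qed

lemma has_sum_str_weight_prefix:
  fixes P :: "nat list \<Rightarrow> bool"
  assumes "b \<ge> 2" "d < b" "l \<le> k"
  defines "G \<equiv> {J. is_string b J \<and> length J = l \<and> P J}"
  shows "(str_weight b has_sum real b * real (card G) / real b ^ l) {X \<in> strings_count b d k. P (take l X)}"
proof -
  let ?SS = "SIGMA J:G. strings_count b d (k - count_list J d)"
  have "finite G"
    unfolding G_def by (rule finite_subset[OF _ finite_strings_length[of b l]]) auto
  have "(\<Sum>J\<in>G. str_weight b J * real b) = real b * real (card G) / real b ^ l"
    by (simp add: G_def str_weight_def)
  then have outer: "((\<lambda>J. str_weight b J * real b) has_sum real b * real (card G) / real b ^ l) G"
    using has_sum_finite[OF \<open>finite G\<close>] by metis
  have inner: "((\<lambda>Y. (str_weight b \<circ> (\<lambda>(J, Y). J @ Y)) (J, Y)) has_sum str_weight b J * real b)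
      (strings_count b d (k - count_list J d))" for J
    unfolding comp_def case_prod_conv str_weight_append
    by (rule has_sum_cmult_right[OF has_sum_str_weight_strings_count[OF assms(1,2)]])
  have "((str_weight b \<circ> (\<lambda>(J, Y). J @ Y)) has_sum real b * real (card G) / real b ^ l) ?SS"
    by (rule has_sum_Sigma_nonneg[OF inner outer]) (simp add: str_weight_nonneg)
  moreover have "inj_on (\<lambda>(J, Y). J @ Y) ?SS"
    by (auto simp: inj_on_def G_def)
  ultimately show ?thesis
    unfolding G_def strings_count_prefix_decomp[OF assms(3)] by (simp add: has_sum_reindex G_def)
qed

lemma floor_scaled_str_point:
  assumes "b \<ge> 2" "is_string b X" "l \<le> length X"
  shows "\<lfloor>real b ^ l * str_point b X\<rfloor> = int (str_val b (take l X))"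
proof -
  define J Y where "J = take l X" and "Y = drop l X"
  have X: "X = J @ Y" and "length J = l" and "is_string b Y"
    using assms by (simp_all add: J_def Y_def) (metis append_take_drop_id is_string_append)
  have pos: "real b ^ length Y > 0" using assms by simp
  have tail: "real (str_val b Y) < real b ^ length Y"
    using str_val_less[OF \<open>is_string b Y\<close>] by (metis of_nat_less_iff of_nat_power)
  have "real b ^ l * str_point b X = real (str_val b J) + real (str_val b Y) / real b ^ length Y"
    using assms(1) \<open>length J = l\<close> unfolding str_point_def X str_val_append
    by (simp add: power_add field_simps)
  moreover have "0 \<le> real (str_val b Y) / real b ^ length Y" "real (str_val b Y) / real b ^ length Y < 1"
    using pos tail by auto
  ultimately show ?thesis
    unfolding J_def by (simp add: floor_eq_iff)
qed

lemma str_point_mem_iff_prefix: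
  assumes "b \<ge> 2" "real b ^ l * t = of_int a" "real b ^ l * u = of_int c"
    and "is_string b X" "l \<le> length X"
  shows "str_point b X \<in> {t..<u} \<longleftrightarrow> a \<le> int (str_val b (take l X)) \<and> int (str_val b (take l X)) < c"
proof -
  have pos: "real b ^ l > 0" using assms by simp
  have "t \<le> str_point b X \<longleftrightarrow> a \<le> \<lfloor>real b ^ l * str_point b X\<rfloor>"
    using pos assms(2) by (metis le_floor_iff mult_le_cancel_left_pos)
  moreover have "str_point b X < u \<longleftrightarrow> \<lfloor>real b ^ l * str_point b X\<rfloor> < c"
    using pos assms(3) by (metis floor_less_iff mult_less_cancel_left_pos)
  ultimately show ?thesis
    using floor_scaled_str_point[OF assms(1,4,5)] by simp
qed

lemma mu_bimal_interval:
  assumes "b \<ge> 2" "d < b"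
    and ta: "real b ^ l * t = of_int a" and uc: "real b ^ l * u = of_int c"
    and "0 \<le> t" "t < u" "u \<le> 1" "l \<le> k"
  shows "mu b d k {t..<u} = ennreal (real b * (u - t))"
proof -
  have pos: "real b ^ l > 0" using assms by simp
  have "0 \<le> a"
    using mult_nonneg_nonneg[OF less_imp_le[OF pos] \<open>0 \<le> t\<close>] by (simp add: ta)
  moreover have "a < c"
    using mult_strict_left_mono[OF \<open>t < u\<close> pos] by (simp add: ta uc)
  moreover have "real_of_int c \<le> real_of_int (int (b ^ l))"
    using pos \<open>u \<le> 1\<close> by (simp add: mult_left_le flip: uc)
  then have "c \<le> int (b ^ l)"
    by (simp only: of_int_le_iff)
  ultimately have card: "card {J. is_string b J \<and> length J = l \<and> a \<le> int (str_val b J) \<and> int (str_val b J) < c}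
      = real_of_int c - real_of_int a"
    by (simp add: card_strings_value_between)
  have "str_point b X \<in> {t..<u} \<longleftrightarrow> a \<le> int (str_val b (take l X)) \<and> int (str_val b (take l X)) < c"
    if "X \<in> strings_count b d k" for X
    using that str_point_mem_iff_prefix[OF assms(1) ta uc] count_le_length[of X d] \<open>l \<le> k\<close>
    by (simp add: strings_count_def)
  then have "{X \<in> strings_count b d k. str_point b X \<in> {t..<u}}
      = {X \<in> strings_count b d k. a \<le> int (str_val b (take l X)) \<and> int (str_val b (take l X)) < c}"
    by blast
  moreover have "real b * (real_of_int c - real_of_int a) / real b ^ l = real b * (u - t)"
    using pos by (simp add: ta[symmetric] uc[symmetric] field_simps)
  ultimately have "(str_weight b has_sum real b * (u - t)) {X \<in> strings_count b d k. str_point b X \<in> {t..<u}}"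
    using has_sum_str_weight_prefix[OF assms(1,2,8),
        where P = "\<lambda>J. a \<le> int (str_val b J) \<and> int (str_val b J) < c"] card
    by simp
  then show ?thesis
    unfolding mu_eq_infsum_str_weight by (intro infsumI has_sum_ennreal) (simp_all add: str_weight_nonneg)
qed

lemma mu_grid_interval:
  assumes "b \<ge> 2" "d < b" "0 \<le> a" "a < c" "c \<le> int (b ^ l)" "l \<le> k"
  shows "mu b d k {of_int a / real b ^ l..<of_int c / real b ^ l}
    = ennreal (real b * (of_int c - of_int a) / real b ^ l)"
proof -
  have pos: "real b ^ l > 0" using assms by simp
  have "real_of_int c \<le> real_of_int (int (b ^ l))"
    using assms(5) by (simp only: of_int_le_iff)
  then have "of_int c / real b ^ l \<le> 1"
    using pos by simp
  moreover have "0 \<le> of_int a / real b ^ l" "of_int a / real b ^ l < of_int c / real b ^ l"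
    using assms(3,4) pos by (simp_all add: divide_strict_right_mono)
  ultimately have "mu b d k {of_int a / real b ^ l..<of_int c / real b ^ l}
      = ennreal (real b * (of_int c / real b ^ l - of_int a / real b ^ l))"
    using pos assms(6) by (intro mu_bimal_interval[OF assms(1,2)]) simp_all
  also have "real b * (of_int c / real b ^ l - of_int a / real b ^ l) = real b * (of_int c - of_int a) / real b ^ l"
    by (simp flip: diff_divide_distrib)
  finally show ?thesis .
qed

lemma mu_mono: "A \<subseteq> B \<Longrightarrow> mu b d k A \<le> mu b d k B"
  unfolding mu_def by (rule infsum_mono_neutral) (auto intro: nonneg_summable_on_complete)

lemma interval_mem_between_Inf_Sup:
  fixes I :: "real set"
  assumes "is_interval I" "I \<noteq> {}" "bdd_below I" "bdd_above I" "Inf I < x" "x < Sup I"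
  shows "x \<in> I"
proof -
  obtain y z where "y \<in> I" "y < x" "z \<in> I" "x < z"
    using assms cInf_less_iff less_cSup_iff by metis
  then show ?thesis
    using assms(1) unfolding is_interval_1 by (meson less_imp_le)
qed

lemma mu_interval_le:
  fixes I :: "real set"
  assumes "b \<ge> 2" "d < b" "I \<noteq> {}" "I \<subseteq> {0..<1}"
  shows "mu b d k I \<le> ennreal (real b * (Sup I - Inf I) + 2 * real b / real b ^ k)"
proof -
  define B where "B = real b ^ k"
  define lo where "lo = \<lfloor>B * Inf I\<rfloor>"
  define hi where "hi = min (\<lfloor>B * Sup I\<rfloor> + 1) (int (b ^ k))"
  have pos: "B > 0" using assms by (simp add: B_def)
  have bdd: "bdd_below I" "bdd_above I"
    using assms(4) by (auto intro!: bdd_belowI[of _ 0] bdd_aboveI[of _ 1])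
  have "0 \<le> Inf I"
    using assms(3,4) by (intro cInf_greatest) auto
  then have "0 \<le> lo"
    using pos by (simp add: lo_def)
  have grid: "of_int lo \<le> B * x \<and> B * x < of_int hi" if "x \<in> I" for x
  proof -
    have "Inf I \<le> x" "x \<le> Sup I" "x < 1"
      using that bdd assms(4) by (auto intro: cInf_lower cSup_upper)
    then have "B * Inf I \<le> B * x" "B * x \<le> B * Sup I" "B * x < B"
      using pos by simp_all
    have "B * x < of_int (\<lfloor>B * Sup I\<rfloor> + 1)"
      using \<open>B * x \<le> B * Sup I\<close> by linarith
    moreover have "B * x < of_int (int (b ^ k))"
      using \<open>B * x < B\<close> by (simp add: B_def)
    ultimately have "B * x < of_int hi"
      unfolding hi_def by linarith
    moreover have "of_int lo \<le> B * x"
      using \<open>B * Inf I \<le> B * x\<close> unfolding lo_def by linarith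
    ultimately show ?thesis by simp
  qed
  then have sub: "I \<subseteq> {of_int lo / B..<of_int hi / B}"
    using pos by (auto simp: field_simps)
  obtain x0 where "x0 \<in> I" using assms(3) by blast
  then have "lo < hi"
    using grid by force
  have "mu b d k I \<le> mu b d k {of_int lo / B..<of_int hi / B}"
    using sub by (rule mu_mono)
  also have "\<dots> = ennreal (real b * (of_int hi - of_int lo) / B)"
    unfolding B_def using assms(1,2) \<open>0 \<le> lo\<close> \<open>lo < hi\<close> by (rule mu_grid_interval) (simp_all add: hi_def)
  also have "\<dots> \<le> ennreal (real b * (Sup I - Inf I) + 2 * real b / B)"
  proof (rule ennreal_leI)
    have "of_int hi - of_int lo \<le> B * (Sup I - Inf I) + 2"
      unfolding lo_def hi_def by (simp add: right_diff_distrib) linarith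
    then have "real b * (of_int hi - of_int lo) / B \<le> real b * (B * (Sup I - Inf I) + 2) / B"
      using pos by (intro divide_right_mono mult_left_mono) simp_all
    also have "\<dots> = real b * (Sup I - Inf I) + 2 * real b / B"
      using pos by (simp add: field_simps)
    finally show "real b * (of_int hi - of_int lo) / B \<le> real b * (Sup I - Inf I) + 2 * real b / B" .
  qed
  finally show ?thesis
    by (simp add: B_def)
qed

lemma mu_interval_ge:
  fixes I :: "real set"
  assumes "b \<ge> 2" "d < b" "is_interval I" "I \<noteq> {}" "I \<subseteq> {0..<1}"
  shows "ennreal (real b * (Sup I - Inf I) - 2 * real b / real b ^ k) \<le> mu b d k I"
proof -
  define B where "B = real b ^ k"
  define lo where "lo = \<lfloor>B * Inf I\<rfloor> + 1"
  define hi where "hi = \<lfloor>B * Sup I\<rfloor>"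
  have pos: "B > 0" using assms by (simp add: B_def)
  have gap: "B * (Sup I - Inf I) - 2 \<le> of_int hi - of_int lo"
    unfolding lo_def hi_def by (simp add: right_diff_distrib) linarith
  have rescale: "real b * (Sup I - Inf I) - 2 * real b / B = real b * (B * (Sup I - Inf I) - 2) / B"
    using pos by (simp add: field_simps)
  show ?thesis
  proof (cases "lo < hi")
    case False
    then have "B * (Sup I - Inf I) - 2 \<le> 0"
      using gap by linarith
    then have "real b * (Sup I - Inf I) - 2 * real b / B \<le> 0"
      unfolding rescale using pos by (simp add: divide_nonpos_pos mult_nonneg_nonpos)
    then show ?thesis
      by (simp add: B_def ennreal_neg)
  next
    case True
    have bdd: "bdd_below I" "bdd_above I"
      using assms(5) by (auto intro!: bdd_belowI[of _ 0] bdd_aboveI[of _ 1])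
    have sub: "{of_int lo / B..<of_int hi / B} \<subseteq> I"
    proof
      fix x assume "x \<in> {of_int lo / B..<of_int hi / B}"
      then have "of_int lo \<le> B * x" "B * x < of_int hi"
        using pos by (auto simp: field_simps)
      then have "B * Inf I < B * x" "B * x < B * Sup I"
        unfolding lo_def hi_def by linarith+
      then show "x \<in> I"
        using pos interval_mem_between_Inf_Sup[OF assms(3,4) bdd] by simp
    qed
    have "0 \<le> Inf I"
      using assms(4,5) by (intro cInf_greatest) auto
    moreover have "Sup I \<le> 1"
      using assms(4,5) by (intro cSup_least) auto
    ultimately have "0 \<le> B * Inf I" "B * Sup I \<le> B"
      using pos by simp_all
    then have "0 \<le> lo" "real_of_int hi \<le> real_of_int (int (b ^ k))"
      unfolding lo_def hi_def by (linarith, simp add: B_def, linarith)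
    then have "hi \<le> int (b ^ k)"
      by (simp only: of_int_le_iff)
    have "real b * (Sup I - Inf I) - 2 * real b / B \<le> real b * (of_int hi - of_int lo) / B"
      unfolding rescale
      using gap pos by (intro divide_right_mono mult_left_mono) simp_all
    then have "ennreal (real b * (Sup I - Inf I) - 2 * real b / B)
        \<le> ennreal (real b * (of_int hi - of_int lo) / B)"
      by (rule ennreal_leI)
    also have "\<dots> = mu b d k {of_int lo / B..<of_int hi / B}"
      unfolding B_def using assms(1,2) \<open>0 \<le> lo\<close> True \<open>hi \<le> int (b ^ k)\<close>
      by (rule mu_grid_interval[symmetric]) simp
    also have "\<dots> \<le> mu b d k I"
      using sub by (rule mu_mono)
    finally show ?thesis
      by (simp add: B_def)
  qed
qed

lemma mu_interval_tendsto:
  fixes I :: "real set"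
  assumes "b \<ge> 2" "d < b" "is_interval I" "I \<noteq> {}" "I \<subseteq> {0..<1}"
  shows "(\<lambda>k. mu b d k I) \<longlonglongrightarrow> ennreal (real b * (Sup I - Inf I))"
proof (rule tendsto_sandwich)
  have "(\<lambda>k. 2 * real b / real b ^ k) \<longlonglongrightarrow> 0"
    using assms(1) by (intro LIMSEQ_divide_realpow_zero) simp
  then have "(\<lambda>k. real b * (Sup I - Inf I) - 2 * real b / real b ^ k) \<longlonglongrightarrow> real b * (Sup I - Inf I)"
    and "(\<lambda>k. real b * (Sup I - Inf I) + 2 * real b / real b ^ k) \<longlonglongrightarrow> real b * (Sup I - Inf I)"
    using tendsto_diff[OF tendsto_const] tendsto_add[OF tendsto_const] by fastforce+
  then show "(\<lambda>k. ennreal (real b * (Sup I - Inf I) - 2 * real b / real b ^ k))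
      \<longlonglongrightarrow> ennreal (real b * (Sup I - Inf I))"
    and "(\<lambda>k. ennreal (real b * (Sup I - Inf I) + 2 * real b / real b ^ k))
      \<longlonglongrightarrow> ennreal (real b * (Sup I - Inf I))"
    by auto
qed (use mu_interval_ge[OF assms] mu_interval_le[OF assms(1,2,4,5)] in auto)

theorem mainTheorem15:
  fixes b d :: nat
  assumes "b \<ge> 2" and "d < b"
  shows "(\<forall>(t::real) (u::real) (l'::nat) (k::nat).
            bimal b t \<and> bimal b u \<and> t < u \<and> 0 \<le> t \<and> u \<le> 1 \<and>
            real b ^ l' * t \<in> \<int> \<and> real b ^ l' * u \<in> \<int> \<and> k \<ge> l'
            \<longrightarrow> mu b d k {t..<u} = ennreal (real b * (u - t)))
       \<and> (\<forall>I::real set. is_interval I \<and> I \<noteq> {} \<and> I \<subseteq> {0..<1}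
            \<longrightarrow> (\<lambda>k. mu b d k I) \<longlonglongrightarrow> ennreal (real b * (Sup I - Inf I)))"
proof (intro conjI allI impI)
  fix t u :: real and l' k :: nat
  assume H: "bimal b t \<and> bimal b u \<and> t < u \<and> 0 \<le> t \<and> u \<le> 1 \<and>
            real b ^ l' * t \<in> \<int> \<and> real b ^ l' * u \<in> \<int> \<and> k \<ge> l'"
  then obtain a c where "real b ^ l' * t = of_int a" "real b ^ l' * u = of_int c"
    by (auto elim!: Ints_cases)
  then show "mu b d k {t..<u} = ennreal (real b * (u - t))"
    using mu_bimal_interval[OF assms] H by blast
next
  fix I :: "real set"
  assume "is_interval I \<and> I \<noteq> {} \<and> I \<subseteq> {0..<1}"
  then show "(\<lambda>k. mu b d k I) \<longlonglongrightarrow> ennreal (real b * (Sup I - Inf I))"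
    using mu_interval_tendsto[OF assms] by blast
qed

end
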